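(* Let $\lambda>0$, $L>0$, and let $d,k,T$ be positive integers. Let $\{\{x_t(i)\}_{i\in[k]}\}_{t\in[T]}$ be any sequence of vectors $x_t(i)\in\mathbb{R}^d$ with $\|x_t(i)\|_2\le L$ for all $i\in[k]$, $t\in[T]$. Let $V_0=\lambda I$ and $V_t=\lambda I+\sum_{t'\in[t]}\sum_{i\in[k]}x_{t'}(i)x_{t'}(i)^\top$ for $t\in[T]$. Then $$\sum_{t\in[T]}\sum_{i\in[k]}\min\Big(\frac{1}{\sqrt{k}},\ \|x_t(i)\|_{V_{t-1}^{-1}}\Big)=\tilde{O}\big(\sqrt{dkT}\big)$$ and $$\sum_{t\in[T]}\sum_{i\in[k]}\mathbb{1}\Big(\|x_t(i)\|_{V_{t-1}^{-1}}>1/\sqrt{k}\Big)=\tilde{O}(dk).$$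
   Context: For a positive definite matrix $A$ and vector $x$, $\|x\|_{A}=\sqrt{x^\top A x}$. $[n]=\{1,\dots,n\}$. The notation $\tilde{O}(\cdot)$ hides logarithmic factors (here, factors logarithmic in $1+L^2kT/(d\lambda)$). *)

theory Defs
  imports "Jordan_Normal_Form.Gauss_Jordan_Elimination"
begin

definition gram :: "real \<Rightarrow> nat \<Rightarrow> nat \<Rightarrow> (nat \<Rightarrow> nat \<Rightarrow> real vec) \<Rightarrow> nat \<Rightarrow> real mat" where
  "gram lam d k x t = lam \<cdot>\<^sub>m (1\<^sub>m d) +
     mat d d (\<lambda>(a, b). \<Sum>t'\<in>{1..t}. \<Sum>i\<in>{1..k}. (x t' i $ a) * (x t' i $ b))"

definition inv_norm :: "real mat \<Rightarrow> real vec \<Rightarrow> real" where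
  "inv_norm V y = sqrt (y \<bullet> (the (mat_inverse V) *\<^sub>v y))"

end

theory Submission
  imports Defs "Jordan_Normal_Form.Determinant" "HOL-Analysis.Convex" "HOL-Analysis.L2_Norm"
begin

text \<open>Write b_t(i) for the squared norm of x_t(i) with respect to V_{t-1}^{-1}. Adding the k
  rank-one terms of round t one at a time, the matrix determinant lemma and the Sherman--Morrison
  formula (with Cauchy--Schwarz) give det V_t >= det V_{t-1} (1 + sum_i b_t(i)), while Hadamard's
  inequality and AM--GM bound det V_T by (lambda + k T L^2 / d)^d. Taking logarithms,
  sum_t ln (1 + sum_i b_t(i)) <= d ln (1 + L^2 k T / (d lambda)). The truncated potentials
  min (1/k) (b_t(i)) of one round sum to at most 1, and y <= 2 ln (1 + y) on [0,1], so their total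
  is at most twice that bound. Cauchy--Schwarz over the k T pairs gives the first claim; every
  counted pair has truncated potential exactly 1/k, which gives the second.\<close>

lemma det_unit_lower_triangular:
  fixes A :: "'a :: comm_ring_1 mat"
  assumes A: "A \<in> carrier_mat n n"
    and upper: "\<And>i j. i < j \<Longrightarrow> j < n \<Longrightarrow> A $$ (i,j) = 0"
    and diag: "\<And>i. i < n \<Longrightarrow> A $$ (i,i) = 1"
  shows "det A = 1"
proof -
  have "diag_mat A = replicate n 1"
    using A diag by (intro nth_equalityI) (auto simp: diag_mat_def)
  then show ?thesis using det_lower_triangular[OF upper A] by simp
qed

lemma det_first_column_zero:
  fixes A :: "'a :: comm_ring_1 mat"
  assumes A: "A \<in> carrier_mat (Suc n) (Suc n)"
    and zero: "\<And>i. 0 < i \<Longrightarrow> i < Suc n \<Longrightarrow> A $$ (i,0) = 0"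
  shows "det A = A $$ (0,0) * det (mat n n (\<lambda>(i,j). A $$ (Suc i, Suc j)))"
proof -
  have "det A = (\<Sum>i<Suc n. A $$ (i,0) * cofactor A i 0)"
    by (rule laplace_expansion_column[OF A]) simp
  also have "\<dots> = A $$ (0,0) * cofactor A 0 0"
    unfolding sum.lessThan_Suc_shift using zero by simp
  also have "mat_delete A 0 0 = mat n n (\<lambda>(i,j). A $$ (Suc i, Suc j))"
    unfolding mat_delete_def using A by (intro eq_matI) auto
  then have "cofactor A 0 0 = det (mat n n (\<lambda>(i,j). A $$ (Suc i, Suc j)))"
    unfolding cofactor_def by simp
  finally show ?thesis .
qed

definition schur_complement :: "nat \<Rightarrow> 'a :: field mat \<Rightarrow> 'a mat" where
  "schur_complement n A = mat n n (\<lambda>(i,j).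
     A $$ (Suc i, Suc j) - A $$ (Suc i, 0) * A $$ (0, Suc j) / A $$ (0,0))"

lemma det_schur_complement:
  fixes A :: "'a :: field mat"
  assumes A: "A \<in> carrier_mat (Suc n) (Suc n)" and a: "A $$ (0,0) \<noteq> 0"
  shows "det A = A $$ (0,0) * det (schur_complement n A)"
proof -
  define a where "a = A $$ (0,0)"
  define L where "L = mat (Suc n) (Suc n) (\<lambda>(i,j).
    (if j = i then 1 else 0) + (if j = 0 \<and> i \<noteq> 0 then - A $$ (i,0) / a else 0))"
  have L: "L \<in> carrier_mat (Suc n) (Suc n)" unfolding L_def by simp
  have LA: "(L * A) $$ (i,j) = A $$ (i,j) - (if i \<noteq> 0 then A $$ (i,0) / a * A $$ (0,j) else 0)"
    if "i < Suc n" "j < Suc n" for i j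
  proof -
    have "(L * A) $$ (i,j) = (\<Sum>k\<in>{0..<Suc n}. L $$ (i,k) * A $$ (k,j))"
      using that A L by (simp add: scalar_prod_def)
    also have "\<dots> = (\<Sum>k\<in>{0..<Suc n}. (if k = i then A $$ (k,j) else 0)
        - (if k = 0 then (if i \<noteq> 0 then A $$ (i,0) / a * A $$ (k,j) else 0) else 0))"
      using that by (intro sum.cong refl) (auto simp: L_def algebra_simps)
    also have "\<dots> = A $$ (i,j) - (if i \<noteq> 0 then A $$ (i,0) / a * A $$ (0,j) else 0)"
      unfolding sum_subtractf using that by (simp add: sum.delta)
    finally show ?thesis .
  qed
  have "det L = 1"
    by (rule det_unit_lower_triangular[OF L]) (auto simp: L_def)
  then have "det A = det (L * A)"
    using det_mult[OF L A] by simp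
  also have "\<dots> = (L * A) $$ (0,0) * det (mat n n (\<lambda>(i,j). (L * A) $$ (Suc i, Suc j)))"
  proof (rule det_first_column_zero)
    show "L * A \<in> carrier_mat (Suc n) (Suc n)" using L A by simp
    show "(L * A) $$ (i,0) = 0" if "0 < i" "i < Suc n" for i
      by (subst LA) (use that a in \<open>auto simp: a_def\<close>)
  qed
  also have "mat n n (\<lambda>(i,j). (L * A) $$ (Suc i, Suc j)) = schur_complement n A"
    unfolding schur_complement_def by (intro eq_matI) (auto simp: LA a_def simp del: index_mult_mat)
  also have "(L * A) $$ (0,0) = A $$ (0,0)" by (subst LA) auto
  finally show ?thesis .
qed

text \<open>Vectors are functions \<open>nat \<Rightarrow> real\<close> of which only the first \<open>n\<close> coordinates matter;
  \<open>bilin A n x y\<close> is \<open>x\<^sup>T A y\<close> and \<open>mat_app A n y\<close> is \<open>A y\<close>.\<close>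

definition bilin :: "real mat \<Rightarrow> nat \<Rightarrow> (nat \<Rightarrow> real) \<Rightarrow> (nat \<Rightarrow> real) \<Rightarrow> real" where
  "bilin A n x y = (\<Sum>i<n. \<Sum>j<n. x i * A $$ (i,j) * y j)"

definition mat_app :: "real mat \<Rightarrow> nat \<Rightarrow> (nat \<Rightarrow> real) \<Rightarrow> nat \<Rightarrow> real" where
  "mat_app A n y i = (\<Sum>j<n. A $$ (i,j) * y j)"

definition pos_def :: "nat \<Rightarrow> real mat \<Rightarrow> bool" where
  "pos_def n A \<longleftrightarrow> A \<in> carrier_mat n n \<and> (\<forall>i<n. \<forall>j<n. A $$ (i,j) = A $$ (j,i))
     \<and> (\<forall>y. (\<exists>i<n. y i \<noteq> 0) \<longrightarrow> 0 < bilin A n y y)"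

lemma pos_defD:
  assumes "pos_def n A"
  shows "A \<in> carrier_mat n n" "\<And>i j. i < n \<Longrightarrow> j < n \<Longrightarrow> A $$ (i,j) = A $$ (j,i)"
    "\<And>y. (\<exists>i<n. y i \<noteq> 0) \<Longrightarrow> 0 < bilin A n y y"
  using assms unfolding pos_def_def by blast+

lemma bilin_cong:
  "(\<And>i. i < n \<Longrightarrow> x i = x' i) \<Longrightarrow> (\<And>i. i < n \<Longrightarrow> y i = y' i) \<Longrightarrow> bilin A n x y = bilin A n x' y'"
  unfolding bilin_def by (intro sum.cong refl) auto

lemma bilin_mat_app: "bilin A n x y = (\<Sum>i<n. x i * mat_app A n y i)"
  unfolding bilin_def mat_app_def by (simp add: sum_distrib_left mult.assoc)

lemma scalar_prod_mult_mat_vec_eq_bilin: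
  assumes "B \<in> carrier_mat n n" "x \<in> carrier_vec n" "y \<in> carrier_vec n"
  shows "x \<bullet> (B *\<^sub>v y) = bilin B n (($) x) (($) y)"
  using assms by (simp add: bilin_mat_app mat_app_def scalar_prod_def atLeast0LessThan)

lemma bilin_commute:
  assumes "\<And>i j. i < n \<Longrightarrow> j < n \<Longrightarrow> A $$ (i,j) = A $$ (j,i)"
  shows "bilin A n y x = bilin A n x y"
  unfolding bilin_def using assms by (subst sum.swap) (auto intro!: sum.cong)

lemma bilin_add:
  assumes "A \<in> carrier_mat n n" "B \<in> carrier_mat n n"
  shows "bilin (A + B) n x y = bilin A n x y + bilin B n x y"
  unfolding bilin_def sum.distrib[symmetric] using assms by (intro sum.cong refl) (simp add: algebra_simps)

lemma bilin_diff_square: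
  "bilin A n (\<lambda>i. x i - t * y i) (\<lambda>i. x i - t * y i)
     = bilin A n x x - t * bilin A n x y - t * bilin A n y x + t\<^sup>2 * bilin A n y y"
  unfolding bilin_def
  by (simp add: algebra_simps sum.distrib sum_subtractf sum_distrib_left power2_eq_square)

lemma pos_def_diag_pos:
  assumes A: "pos_def n A" and i: "i < n"
  shows "0 < A $$ (i,i)"
proof -
  let ?e = "\<lambda>k. if k = i then 1 else 0 :: real"
  have "0 < bilin A n ?e ?e" using i by (intro pos_defD(3)[OF A]) auto
  also have "bilin A n ?e ?e = A $$ (i,i)"
    unfolding bilin_def using i
    by (simp add: if_distrib[of "\<lambda>z. z * _"] if_distrib[of "\<lambda>z. _ * z"] cong: if_cong)
  finally show ?thesis .
qed

lemma bilin_nonneg: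
  assumes A: "pos_def n A"
  shows "0 \<le> bilin A n y y"
proof (cases "\<exists>i<n. y i \<noteq> 0")
  case True
  then show ?thesis using pos_defD(3)[OF A] by (simp add: less_imp_le)
next
  case False
  then have "bilin A n y y = bilin A n (\<lambda>_. 0) (\<lambda>_. 0)" by (intro bilin_cong) auto
  then show ?thesis by (simp add: bilin_def)
qed

lemma bilin_Cauchy_Schwarz:
  assumes B: "pos_def n B"
  shows "(bilin B n x y)\<^sup>2 \<le> bilin B n x x * bilin B n y y"
proof (cases "\<exists>i<n. y i \<noteq> 0")
  case False
  then have "bilin B n x y = bilin B n x (\<lambda>_. 0)" by (intro bilin_cong) auto
  then show ?thesis using bilin_nonneg[OF B, of x] bilin_nonneg[OF B, of y] by (simp add: bilin_def)
next
  case True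
  define b where "b = bilin B n y y"
  define c where "c = bilin B n x y"
  have b: "0 < b" unfolding b_def by (rule pos_defD(3)[OF B True])
  have yx: "bilin B n y x = c" unfolding c_def by (rule bilin_commute[OF pos_defD(2)[OF B]])
  have "0 \<le> bilin B n (\<lambda>i. x i - (c/b) * y i) (\<lambda>i. x i - (c/b) * y i)" by (rule bilin_nonneg[OF B])
  also have "\<dots> = bilin B n x x - c\<^sup>2 / b"
    unfolding bilin_diff_square yx c_def[symmetric] b_def[symmetric]
    using b by (simp add: field_simps power2_eq_square)
  finally show ?thesis using b unfolding c_def[symmetric] b_def[symmetric] by (simp add: field_simps)
qed

lemma mult_mat_entry:
  fixes A B :: "'a :: semiring_0 mat"
  assumes "A \<in> carrier_mat n n" "B \<in> carrier_mat n n" "i < n" "j < n"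
  shows "(A * B) $$ (i,j) = (\<Sum>k<n. A $$ (i,k) * B $$ (k,j))"
  using assms by (simp add: scalar_prod_def atLeast0LessThan)

lemma mat_app_mult:
  assumes "A \<in> carrier_mat n n" "B \<in> carrier_mat n n" "i < n"
  shows "mat_app A n (mat_app B n y) i = mat_app (A * B) n y i"
proof -
  have "mat_app A n (mat_app B n y) i = (\<Sum>k<n. \<Sum>j<n. A $$ (i,k) * B $$ (k,j) * y j)"
    unfolding mat_app_def by (simp add: sum_distrib_left mult.assoc)
  also have "\<dots> = (\<Sum>j<n. \<Sum>k<n. A $$ (i,k) * B $$ (k,j) * y j)"
    by (rule sum.swap)
  also have "\<dots> = mat_app (A * B) n y i"
    unfolding mat_app_def
    by (intro sum.cong refl) (simp add: mult_mat_entry[OF assms(1,2,3)] sum_distrib_right)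
  finally show ?thesis .
qed

lemma mat_app_one: "i < n \<Longrightarrow> mat_app (1\<^sub>m n) n y i = y i"
  unfolding mat_app_def by (simp add: if_distrib[of "\<lambda>z. z * _"] cong: if_cong)

lemma bilin_schur_complement:
  fixes y :: "nat \<Rightarrow> real"
  assumes sym: "\<And>i j. i < Suc n \<Longrightarrow> j < Suc n \<Longrightarrow> A $$ (i,j) = A $$ (j,i)"
    and a: "A $$ (0,0) \<noteq> 0"
  defines "z \<equiv> \<lambda>i. if i = 0 then - (\<Sum>j<n. A $$ (0, Suc j) * y j) / A $$ (0,0) else y (i - 1)"
  shows "bilin A (Suc n) z z = bilin (schur_complement n A) n y y"
proof -
  define c where "c = (\<Sum>j<n. A $$ (0, Suc j) * y j)"
  let ?Q = "\<Sum>i<n. \<Sum>j<n. y i * A $$ (Suc i, Suc j) * y j"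
  have c': "(\<Sum>i<n. y i * A $$ (Suc i, 0)) = c"
    unfolding c_def using sym by (intro sum.cong refl) (simp add: mult.commute)
  have z0: "z 0 = - c / A $$ (0,0)" by (simp add: z_def c_def)
  have zS: "z (Suc i) = y i" for i by (simp add: z_def)
  have "bilin A (Suc n) z z = z 0 * A $$ (0,0) * z 0 + (\<Sum>j<n. z 0 * A $$ (0, Suc j) * y j)
      + (\<Sum>i<n. y i * A $$ (Suc i, 0) * z 0) + ?Q"
    unfolding bilin_def sum.lessThan_Suc_shift by (simp only: zS sum.distrib add.assoc)
  also have "(\<Sum>j<n. z 0 * A $$ (0, Suc j) * y j) = z 0 * c"
    unfolding c_def sum_distrib_left by (simp add: mult.assoc)
  also have "(\<Sum>i<n. y i * A $$ (Suc i, 0) * z 0) = c * z 0"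
    using c' by (simp add: sum_distrib_right[symmetric])
  also have "z 0 * A $$ (0,0) * z 0 + z 0 * c + c * z 0 = - (c * c / A $$ (0,0))"
    using a by (simp add: z0 field_simps)
  also have "- (c * c / A $$ (0,0)) + ?Q = bilin (schur_complement n A) n y y"
  proof -
    have "bilin (schur_complement n A) n y y = (\<Sum>i<n. \<Sum>j<n. y i * A $$ (Suc i, Suc j) * y j
        - (y i * A $$ (Suc i, 0)) * (A $$ (0, Suc j) * y j) / A $$ (0,0))"
      unfolding bilin_def schur_complement_def by (intro sum.cong refl) (simp add: algebra_simps)
    also have "\<dots> = ?Q - (\<Sum>i<n. y i * A $$ (Suc i, 0)) * (\<Sum>j<n. A $$ (0, Suc j) * y j) / A $$ (0,0)"
      by (simp add: sum_subtractf sum_product sum_divide_distrib)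
    finally show ?thesis unfolding c' c_def[symmetric] by simp
  qed
  finally show ?thesis .
qed

lemma pos_def_schur_complement:
  assumes A: "pos_def (Suc n) A"
  shows "pos_def n (schur_complement n A)"
  unfolding pos_def_def
proof (intro conjI allI impI)
  have sym: "\<And>i j. i < Suc n \<Longrightarrow> j < Suc n \<Longrightarrow> A $$ (i,j) = A $$ (j,i)" by (rule pos_defD(2)[OF A])
  have a: "A $$ (0,0) \<noteq> 0" using pos_def_diag_pos[OF A, of 0] by simp
  show "schur_complement n A \<in> carrier_mat n n" by (simp add: schur_complement_def)
  show "schur_complement n A $$ (i,j) = schur_complement n A $$ (j,i)" if "i < n" "j < n" for i j
    using that sym[of "Suc i" "Suc j"] sym[of "Suc i" 0] sym[of "Suc j" 0]
    by (simp add: schur_complement_def)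
  fix y :: "nat \<Rightarrow> real"
  assume "\<exists>i<n. y i \<noteq> 0"
  then obtain i0 where "i0 < n" "y i0 \<noteq> 0" by blast
  define z where "z = (\<lambda>i. if i = 0 then - (\<Sum>j<n. A $$ (0, Suc j) * y j) / A $$ (0,0) else y (i - 1))"
  have "\<exists>i<Suc n. z i \<noteq> 0"
    using \<open>i0 < n\<close> \<open>y i0 \<noteq> 0\<close> by (intro exI[of _ "Suc i0"]) (simp add: z_def)
  then have "0 < bilin A (Suc n) z z" by (rule pos_defD(3)[OF A])
  then show "0 < bilin (schur_complement n A) n y y"
    using bilin_schur_complement[OF sym a, where y = y] unfolding z_def by simp
qed

lemma det_le_prod_diag:
  assumes "pos_def n A"
  shows "det A \<le> (\<Prod>i<n. A $$ (i,i))"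
  using assms
proof (induction n arbitrary: A)
  case 0
  then show ?case using pos_defD(1) by simp
next
  case (Suc n)
  have A: "A \<in> carrier_mat (Suc n) (Suc n)" by (rule pos_defD(1)[OF Suc.prems])
  define a where "a = A $$ (0,0)"
  have a: "0 < a" unfolding a_def by (rule pos_def_diag_pos[OF Suc.prems]) simp
  define S where "S = schur_complement n A"
  have S: "pos_def n S" unfolding S_def by (rule pos_def_schur_complement[OF Suc.prems])
  have diag: "0 < S $$ (i,i) \<and> S $$ (i,i) \<le> A $$ (Suc i, Suc i)" if "i < n" for i
  proof -
    have "0 \<le> A $$ (Suc i, 0) * A $$ (0, Suc i) / a"
      using pos_defD(2)[OF Suc.prems, of "Suc i" 0] that a by simp
    then show ?thesis using that pos_def_diag_pos[OF S that] by (simp add: S_def schur_complement_def a_def)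
  qed
  have "det A = a * det S"
    unfolding a_def S_def using a by (intro det_schur_complement[OF A]) (simp add: a_def)
  also have "\<dots> \<le> a * (\<Prod>i<n. S $$ (i,i))" using Suc.IH[OF S] a by simp
  also have "\<dots> \<le> a * (\<Prod>i<n. A $$ (Suc i, Suc i))"
    using diag a by (intro mult_left_mono prod_mono) (auto simp: less_imp_le)
  also have "\<dots> = (\<Prod>i<Suc n. A $$ (i,i))" unfolding prod.lessThan_Suc_shift a_def by simp
  finally show ?case .
qed

lemma det_le_mean_diag_power:
  assumes A: "pos_def n A" and n: "0 < n"
  shows "det A \<le> ((\<Sum>i<n. A $$ (i,i)) / n) ^ n"
proof -
  let ?P = "\<Prod>i<n. A $$ (i,i)"
  have D: "0 < A $$ (i,i)" if "i < n" for i by (rule pos_def_diag_pos[OF A that])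
  then have P: "0 < ?P" by (intro prod_pos) auto
  have "(?P powr (1 / n)) ^ n = ?P powr (real n * (1 / n))"
    by (rule powr_power) (use P in linarith)
  then have "?P = (?P powr (1 / n)) ^ n"
    using P n by simp
  also have "\<dots> \<le> ((\<Sum>i<n. A $$ (i,i)) / n) ^ n"
    using arith_geom_mean[of "{..<n}" "\<lambda>i. A $$ (i,i)"] D n
    by (intro power_mono) (auto simp: sum_divide_distrib less_imp_le)
  finally show ?thesis using det_le_prod_diag[OF A] by linarith
qed

definition mat_inv :: "real mat \<Rightarrow> real mat" where
  "mat_inv V = the (mat_inverse V)"

lemma pos_def_det_nonzero:
  assumes V: "pos_def n V"
  shows "det V \<noteq> 0"
proof
  assume "det V = 0"
  then obtain v where v: "v \<in> carrier_vec n" "v \<noteq> 0\<^sub>v n" "V *\<^sub>v v = 0\<^sub>v n"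
    using det_0_iff_vec_prod_zero_field[OF pos_defD(1)[OF V]] by blast
  have "\<exists>i<n. v $ i \<noteq> 0"
  proof (rule ccontr)
    assume "\<not> (\<exists>i<n. v $ i \<noteq> 0)"
    then have "v = 0\<^sub>v n" using v(1) by (intro eq_vecI) auto
    then show False using v(2) by simp
  qed
  then have "0 < bilin V n (($) v) (($) v)" by (rule pos_defD(3)[OF V])
  also have "\<dots> = v \<bullet> (V *\<^sub>v v)"
    using scalar_prod_mult_mat_vec_eq_bilin[OF pos_defD(1)[OF V] v(1) v(1)] by simp
  also have "\<dots> = 0" using v by simp
  finally show False by simp
qed

lemma pos_def_mat_inverse:
  assumes V: "pos_def n V"
  shows "mat_inverse V = Some (mat_inv V)" "V * mat_inv V = 1\<^sub>m n" "mat_inv V * V = 1\<^sub>m n"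
    "mat_inv V \<in> carrier_mat n n"
proof -
  have C: "V \<in> carrier_mat n n" by (rule pos_defD(1)[OF V])
  have "V \<in> Units (ring_mat TYPE(real) n ())"
    by (rule det_non_zero_imp_unit[OF C pos_def_det_nonzero[OF V]])
  then obtain B where B: "mat_inverse V = Some B"
    using mat_inverse(1)[where b = "()", OF C] by (cases "mat_inverse V") auto
  then show "mat_inverse V = Some (mat_inv V)" "V * mat_inv V = 1\<^sub>m n" "mat_inv V * V = 1\<^sub>m n"
    "mat_inv V \<in> carrier_mat n n"
    using mat_inverse(2)[OF C B] by (auto simp: mat_inv_def)
qed

lemma mat_app_mat_inv:
  assumes V: "pos_def n V" and i: "i < n"
  shows "mat_app V n (mat_app (mat_inv V) n y) i = y i"
  using mat_app_mult[OF pos_defD(1)[OF V] pos_def_mat_inverse(4)[OF V] i]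
    pos_def_mat_inverse(2)[OF V] mat_app_one[OF i] by simp

lemma mat_inv_eqI:
  assumes V: "pos_def n V" and C: "C \<in> carrier_mat n n" and VC: "V * C = 1\<^sub>m n"
  shows "mat_inv V = C"
proof -
  have B: "mat_inv V \<in> carrier_mat n n" by (rule pos_def_mat_inverse(4)[OF V])
  have "mat_inv V = mat_inv V * (V * C)" using VC B by simp
  also have "\<dots> = (mat_inv V * V) * C" using B pos_defD(1)[OF V] C by (simp add: assoc_mult_mat)
  also have "\<dots> = C" using pos_def_mat_inverse(3)[OF V] C by simp
  finally show ?thesis .
qed

lemma mat_inv_symmetric:
  assumes V: "pos_def n V" and ij: "i < n" "j < n"
  shows "mat_inv V $$ (i,j) = mat_inv V $$ (j,i)"
proof -
  have C: "V \<in> carrier_mat n n" by (rule pos_defD(1)[OF V])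
  have B: "mat_inv V \<in> carrier_mat n n" by (rule pos_def_mat_inverse(4)[OF V])
  have "transpose_mat V = V" using C pos_defD(2)[OF V] by (intro eq_matI) auto
  then have "V * transpose_mat (mat_inv V) = 1\<^sub>m n"
    using transpose_mult[OF B C] pos_def_mat_inverse(3)[OF V] by (metis transpose_one)
  then have "mat_inv V = transpose_mat (mat_inv V)"
    by (rule mat_inv_eqI[OF V, rotated]) (use B in simp)
  then show ?thesis using ij B by (metis carrier_matD index_transpose_mat(1))
qed

lemma pos_def_mat_inv:
  assumes V: "pos_def n V"
  shows "pos_def n (mat_inv V)"
  unfolding pos_def_def
proof (intro conjI allI impI)
  show "mat_inv V \<in> carrier_mat n n" by (rule pos_def_mat_inverse(4)[OF V])
  show "mat_inv V $$ (i,j) = mat_inv V $$ (j,i)" if "i < n" "j < n" for i j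
    using mat_inv_symmetric[OF V that] .
next
  fix y :: "nat \<Rightarrow> real"
  assume ex: "\<exists>i<n. y i \<noteq> 0"
  define w where "w = mat_app (mat_inv V) n y"
  have Vw: "mat_app V n w i = y i" if "i < n" for i
    unfolding w_def by (rule mat_app_mat_inv[OF V that])
  have "\<exists>i<n. w i \<noteq> 0"
  proof (rule ccontr)
    assume "\<not> (\<exists>i<n. w i \<noteq> 0)"
    then have "mat_app V n w i = 0" for i unfolding mat_app_def by simp
    then show False using Vw ex by force
  qed
  then have "0 < bilin V n w w" by (rule pos_defD(3)[OF V])
  also have "bilin V n w w = bilin (mat_inv V) n y y"
    unfolding bilin_mat_app[of V] bilin_mat_app[of "mat_inv V"] w_def[symmetric] using Vw
    by (auto intro!: sum.cong simp: mult.commute)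
  finally show "0 < bilin (mat_inv V) n y y" .
qed

text \<open>The bordered matrix \<open>[[a, w\<^sup>T], [y, V]]\<close>. Comparing its two Schur complements yields the
  matrix determinant lemma.\<close>

definition border_mat :: "nat \<Rightarrow> real \<Rightarrow> (nat \<Rightarrow> real) \<Rightarrow> (nat \<Rightarrow> real) \<Rightarrow> real mat \<Rightarrow> real mat" where
  "border_mat n a w y V = mat (Suc n) (Suc n) (\<lambda>(i,j).
     if i = 0 then (if j = 0 then a else w (j - 1))
     else if j = 0 then y (i - 1) else V $$ (i - 1, j - 1))"

lemma det_border_mat_top:
  assumes a: "a \<noteq> 0"
  shows "det (border_mat n a w y V) = a * det (mat n n (\<lambda>(i,j). V $$ (i,j) - y i * w j / a))"
proof -
  have "schur_complement n (border_mat n a w y V) = mat n n (\<lambda>(i,j). V $$ (i,j) - y i * w j / a)"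
    by (intro eq_matI) (auto simp: schur_complement_def border_mat_def)
  then show ?thesis
    using det_schur_complement[of "border_mat n a w y V" n] a by (simp add: border_mat_def)
qed

lemma det_border_mat_bottom:
  assumes V: "V \<in> carrier_mat n n" and u: "\<And>i. i < n \<Longrightarrow> mat_app V n u i = y i"
  shows "det (border_mat n a w y V) = (a - (\<Sum>j<n. w j * u j)) * det V"
proof -
  define M where "M = border_mat n a w y V"
  define E where "E = mat (Suc n) (Suc n) (\<lambda>(i,j).
    (if i = j then 1 else 0) - (if j = 0 \<and> i \<noteq> 0 then u (i - 1) else 0))"
  have M: "M \<in> carrier_mat (Suc n) (Suc n)" unfolding M_def border_mat_def by simp
  have E: "E \<in> carrier_mat (Suc n) (Suc n)" unfolding E_def by simp
  have "det E = 1" by (rule det_unit_lower_triangular[OF E]) (auto simp: E_def)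
  then have "det M = det (M * E)" using det_mult[OF M E] by simp
  have ME: "(M * E) $$ (i,j) = M $$ (i,j) - (if j = 0 then \<Sum>k<n. M $$ (i, Suc k) * u k else 0)"
    if ij: "i < Suc n" "j < Suc n" for i j
  proof -
    have "(M * E) $$ (i,j) = (\<Sum>k<Suc n. M $$ (i,k) * (if k = j then 1 else 0))
        - (\<Sum>k<Suc n. M $$ (i,k) * (if j = 0 \<and> k \<noteq> 0 then u (k - 1) else 0))"
      unfolding mult_mat_entry[OF M E ij] sum_subtractf[symmetric]
      using ij by (intro sum.cong refl) (auto simp: E_def algebra_simps)
    also have "(\<Sum>k<Suc n. M $$ (i,k) * (if k = j then 1 else 0)) = M $$ (i,j)"
      using ij by (simp add: if_distrib[of "\<lambda>z. _ * z"] cong: if_cong)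
    also have "(\<Sum>k<Suc n. M $$ (i,k) * (if j = 0 \<and> k \<noteq> 0 then u (k - 1) else 0))
        = (if j = 0 then \<Sum>k<n. M $$ (i, Suc k) * u k else 0)"
      unfolding sum.lessThan_Suc_shift by (cases "j = 0") simp_all
    finally show ?thesis .
  qed
  have "det (M * E) = (M * E) $$ (0,0) * det (mat n n (\<lambda>(i,j). (M * E) $$ (Suc i, Suc j)))"
  proof (rule det_first_column_zero)
    show "M * E \<in> carrier_mat (Suc n) (Suc n)" using M E by simp
    show "(M * E) $$ (i,0) = 0" if "0 < i" "i < Suc n" for i
      using that u[of "i - 1"] by (subst ME) (auto simp: M_def border_mat_def mat_app_def)
  qed
  also have "mat n n (\<lambda>(i,j). (M * E) $$ (Suc i, Suc j)) = V"
  proof -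
    have "(M * E) $$ (Suc i, Suc j) = V $$ (i,j)" if "i < n" "j < n" for i j
      by (subst ME) (use that in \<open>auto simp: M_def border_mat_def\<close>)
    then show ?thesis using V by (intro eq_matI) (auto simp del: index_mult_mat)
  qed
  also have "(M * E) $$ (0,0) = a - (\<Sum>j<n. w j * u j)"
    by (subst ME) (auto simp: M_def border_mat_def)
  finally show ?thesis using \<open>det M = det (M * E)\<close> unfolding M_def by simp
qed

definition outer_mat :: "nat \<Rightarrow> (nat \<Rightarrow> real) \<Rightarrow> real mat" where
  "outer_mat n y = mat n n (\<lambda>(p,q). y p * y q)"

lemma bilin_outer_mat: "bilin (outer_mat n y) n z z = (\<Sum>p<n. z p * y p)\<^sup>2"
  unfolding bilin_def outer_mat_def power2_eq_square sum_product
  by (intro sum.cong refl) (simp add: algebra_simps)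

lemma pos_def_add_outer:
  assumes V: "pos_def n V"
  shows "pos_def n (V + outer_mat n y)"
proof -
  have C: "V \<in> carrier_mat n n" by (rule pos_defD(1)[OF V])
  have O: "outer_mat n y \<in> carrier_mat n n" unfolding outer_mat_def by simp
  show ?thesis
    unfolding pos_def_def
  proof (intro conjI allI impI)
    show "V + outer_mat n y \<in> carrier_mat n n" using C O by simp
    show "(V + outer_mat n y) $$ (i,j) = (V + outer_mat n y) $$ (j,i)" if "i < n" "j < n" for i j
      using that C pos_defD(2)[OF V that] by (simp add: outer_mat_def mult.commute)
    show "0 < bilin (V + outer_mat n y) n z z" if "\<exists>i<n. z i \<noteq> 0" for z
      using pos_defD(3)[OF V that] unfolding bilin_add[OF C O] bilin_outer_mat
      by (simp add: add_pos_nonneg)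
  qed
qed

lemma det_add_outer:
  assumes V: "pos_def n V"
  shows "det (V + outer_mat n y) = det V * (1 + bilin (mat_inv V) n y y)"
proof -
  have C: "V \<in> carrier_mat n n" by (rule pos_defD(1)[OF V])
  have "V + outer_mat n y = mat n n (\<lambda>(i,j). V $$ (i,j) - y i * - y j / 1)"
    using C by (intro eq_matI) (auto simp: outer_mat_def)
  then have "det (V + outer_mat n y) = det (border_mat n 1 (\<lambda>j. - y j) y V)"
    using det_border_mat_top[of 1 n "\<lambda>j. - y j" y V] by simp
  also have "\<dots> = (1 - (\<Sum>j<n. - y j * mat_app (mat_inv V) n y j)) * det V"
    by (rule det_border_mat_bottom[OF C mat_app_mat_inv[OF V]])
  also have "(\<Sum>j<n. - y j * mat_app (mat_inv V) n y j) = - bilin (mat_inv V) n y y"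
    by (simp add: bilin_mat_app sum_negf)
  finally show ?thesis by simp
qed

lemma mat_inv_add_outer:
  fixes y :: "nat \<Rightarrow> real"
  assumes V: "pos_def n V"
  defines "u \<equiv> mat_app (mat_inv V) n y" and "\<beta> \<equiv> bilin (mat_inv V) n y y"
  shows "mat_inv (V + outer_mat n y) = mat n n (\<lambda>(i,j). mat_inv V $$ (i,j) - u i * u j / (1 + \<beta>))"
    (is "_ = ?C")
proof (rule mat_inv_eqI[OF pos_def_add_outer[OF V]])
  have C: "V \<in> carrier_mat n n" by (rule pos_defD(1)[OF V])
  have B: "mat_inv V \<in> carrier_mat n n" by (rule pos_def_mat_inverse(4)[OF V])
  have VO: "V + outer_mat n y \<in> carrier_mat n n" using C by (simp add: outer_mat_def)
  have \<beta>: "0 \<le> \<beta>" unfolding \<beta>_def by (rule bilin_nonneg[OF pos_def_mat_inv[OF V]])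
  show C': "?C \<in> carrier_mat n n" by simp
  show "(V + outer_mat n y) * ?C = 1\<^sub>m n"
  proof (rule eq_matI)
    fix i j assume "i < dim_row (1\<^sub>m n)" "j < dim_col (1\<^sub>m n)"
    then have ij: "i < n" "j < n" by auto
    have "((V + outer_mat n y) * ?C) $$ (i,j)
        = (\<Sum>k<n. (V $$ (i,k) + y i * y k) * (mat_inv V $$ (k,j) - u k * u j / (1 + \<beta>)))"
      unfolding mult_mat_entry[OF VO C' ij] using ij C by (intro sum.cong refl) (simp add: outer_mat_def)
    also have "\<dots> = (\<Sum>k<n. V $$ (i,k) * mat_inv V $$ (k,j)) + y i * (\<Sum>k<n. y k * mat_inv V $$ (k,j))
        - ((\<Sum>k<n. V $$ (i,k) * u k) + y i * (\<Sum>k<n. y k * u k)) * u j / (1 + \<beta>)"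
      by (simp add: algebra_simps sum.distrib sum_subtractf sum_distrib_left sum_distrib_right
          sum_divide_distrib add_divide_distrib)
    also have "(\<Sum>k<n. V $$ (i,k) * mat_inv V $$ (k,j)) = 1\<^sub>m n $$ (i,j)"
      using mult_mat_entry[OF C B ij] pos_def_mat_inverse(2)[OF V] by simp
    also have "(\<Sum>k<n. V $$ (i,k) * u k) = y i"
      using mat_app_mat_inv[OF V ij(1)] by (simp add: mat_app_def u_def)
    also have "(\<Sum>k<n. y k * mat_inv V $$ (k,j)) = u j"
      unfolding u_def mat_app_def using mat_inv_symmetric[OF V _ ij(2)]
      by (intro sum.cong refl) (simp add: mult.commute)
    also have "(\<Sum>k<n. y k * u k) = \<beta>" unfolding \<beta>_def bilin_mat_app u_def ..
    also have "1\<^sub>m n $$ (i,j) + y i * u j - (y i + y i * \<beta>) * u j / (1 + \<beta>) = 1\<^sub>m n $$ (i,j)"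
      using \<beta> by (simp add: field_simps)
    finally show "((V + outer_mat n y) * ?C) $$ (i,j) = 1\<^sub>m n $$ (i,j)" .
  qed (use C in \<open>auto simp: outer_mat_def\<close>)
qed

lemma bilin_mat_inv_add_outer:
  assumes V: "pos_def n V"
  shows "bilin (mat_inv (V + outer_mat n y)) n z z
       = bilin (mat_inv V) n z z - (bilin (mat_inv V) n z y)\<^sup>2 / (1 + bilin (mat_inv V) n y y)"
proof -
  define u where "u = mat_app (mat_inv V) n y"
  define s where "s = 1 / (1 + bilin (mat_inv V) n y y)"
  have "bilin (mat_inv (V + outer_mat n y)) n z z
      = (\<Sum>i<n. \<Sum>j<n. z i * mat_inv V $$ (i,j) * z j - (z i * u i) * (z j * u j) * s)"
    unfolding mat_inv_add_outer[OF V] bilin_def u_def[symmetric] s_def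
    by (intro sum.cong refl) (simp add: algebra_simps)
  also have "\<dots> = bilin (mat_inv V) n z z - (\<Sum>i<n. z i * u i) * (\<Sum>j<n. z j * u j) * s"
    unfolding bilin_def sum_subtractf sum_product by (simp add: sum_distrib_right)
  also have "(\<Sum>i<n. z i * u i) = bilin (mat_inv V) n z y" unfolding bilin_mat_app u_def ..
  finally show ?thesis by (simp add: s_def power2_eq_square)
qed

lemma bilin_mat_inv_add_outer_ge:
  assumes V: "pos_def n V"
  shows "bilin (mat_inv V) n z z / (1 + bilin (mat_inv V) n y y) \<le> bilin (mat_inv (V + outer_mat n y)) n z z"
proof -
  define b where "b = bilin (mat_inv V) n y y"
  define q where "q = bilin (mat_inv V) n z z"
  have b: "0 \<le> b" unfolding b_def by (rule bilin_nonneg[OF pos_def_mat_inv[OF V]])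
  have "(bilin (mat_inv V) n z y)\<^sup>2 / (1 + b) \<le> q * b / (1 + b)"
    using bilin_Cauchy_Schwarz[OF pos_def_mat_inv[OF V]] b unfolding q_def b_def
    by (intro divide_right_mono) auto
  then have "q - q * b / (1 + b) \<le> bilin (mat_inv (V + outer_mat n y)) n z z"
    unfolding bilin_mat_inv_add_outer[OF V] q_def[symmetric] b_def[symmetric] by linarith
  moreover have "q - q * b / (1 + b) = q / (1 + b)"
    using b by (simp add: field_simps)
  ultimately show ?thesis unfolding q_def b_def by simp
qed

definition outer_sum :: "nat \<Rightarrow> ('a \<Rightarrow> nat \<Rightarrow> real) \<Rightarrow> 'a set \<Rightarrow> real mat" where
  "outer_sum n Y F = mat n n (\<lambda>(p,q). \<Sum>j\<in>F. Y j p * Y j q)"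

lemma add_outer_sum_empty: "V \<in> carrier_mat n n \<Longrightarrow> V + outer_sum n Y {} = V"
  unfolding outer_sum_def by (intro eq_matI) auto

lemma add_outer_sum_insert:
  assumes "V \<in> carrier_mat n n" "finite F" "a \<notin> F"
  shows "V + outer_sum n Y (insert a F) = (V + outer_mat n (Y a)) + outer_sum n Y F"
  using assms unfolding outer_sum_def outer_mat_def by (intro eq_matI) auto

lemma pos_def_add_outer_sum:
  assumes "finite F" "pos_def n V"
  shows "pos_def n (V + outer_sum n Y F)"
  using assms
proof (induction F arbitrary: V rule: finite_induct)
  case empty
  then show ?case using add_outer_sum_empty[of V n Y] pos_defD(1)[OF empty.prems] by simp
next
  case (insert a F)
  then show ?case
    unfolding add_outer_sum_insert[OF pos_defD(1)[OF insert.prems] insert.hyps]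
    by (intro insert.IH pos_def_add_outer)
qed

lemma det_add_outer_sum_ge:
  assumes "finite F" "pos_def n V" "0 < det V"
  shows "det V * (1 + (\<Sum>j\<in>F. bilin (mat_inv V) n (Y j) (Y j))) \<le> det (V + outer_sum n Y F)"
  using assms
proof (induction F arbitrary: V rule: finite_induct)
  case empty
  then show ?case using add_outer_sum_empty[of V n Y] pos_defD(1)[OF empty.prems(1)] by simp
next
  case (insert a F)
  define V' where "V' = V + outer_mat n (Y a)"
  define \<beta> where "\<beta> = bilin (mat_inv V) n (Y a) (Y a)"
  have \<beta>: "0 \<le> \<beta>" unfolding \<beta>_def by (rule bilin_nonneg[OF pos_def_mat_inv[OF insert.prems(1)]])
  have V': "pos_def n V'" unfolding V'_def by (rule pos_def_add_outer[OF insert.prems(1)])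
  have det_V': "det V' = det V * (1 + \<beta>)"
    unfolding V'_def \<beta>_def by (rule det_add_outer[OF insert.prems(1)])
  then have det_V'_pos: "0 < det V'" using insert.prems(2) \<beta> by simp
  have shrink: "(\<Sum>j\<in>F. bilin (mat_inv V) n (Y j) (Y j)) / (1 + \<beta>) \<le> (\<Sum>j\<in>F. bilin (mat_inv V') n (Y j) (Y j))"
    unfolding sum_divide_distrib V'_def \<beta>_def
    by (intro sum_mono bilin_mat_inv_add_outer_ge[OF insert.prems(1)])
  have "det V * (1 + (\<Sum>j\<in>insert a F. bilin (mat_inv V) n (Y j) (Y j)))
      = det V' * (1 + (\<Sum>j\<in>F. bilin (mat_inv V) n (Y j) (Y j)) / (1 + \<beta>))"
    using insert.hyps \<beta> unfolding det_V' by (simp add: \<beta>_def field_simps)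
  also have "\<dots> \<le> det V' * (1 + (\<Sum>j\<in>F. bilin (mat_inv V') n (Y j) (Y j)))"
    using shrink det_V'_pos by (intro mult_left_mono) auto
  also have "\<dots> \<le> det (V' + outer_sum n Y F)" by (rule insert.IH[OF V' det_V'_pos])
  also have "V' + outer_sum n Y F = V + outer_sum n Y (insert a F)"
    unfolding V'_def using add_outer_sum_insert[OF pos_defD(1)[OF insert.prems(1)] insert.hyps] by simp
  finally show ?case .
qed

lemma pos_def_smult_one:
  assumes lam: "0 < lam"
  shows "pos_def n (lam \<cdot>\<^sub>m 1\<^sub>m n)"
  unfolding pos_def_def
proof (intro conjI allI impI)
  fix z :: "nat \<Rightarrow> real"
  assume "\<exists>i<n. z i \<noteq> 0"
  then obtain i0 where i0: "i0 < n" "z i0 \<noteq> 0" by blast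
  have "bilin (lam \<cdot>\<^sub>m 1\<^sub>m n) n z z = (\<Sum>i<n. \<Sum>j<n. if j = i then lam * (z i)\<^sup>2 else 0)"
    unfolding bilin_def by (intro sum.cong refl) (auto simp: power2_eq_square)
  also have "\<dots> = lam * (\<Sum>i<n. (z i)\<^sup>2)" by (simp add: sum_distrib_left)
  also have "0 < \<dots>" using lam i0 by (intro mult_pos_pos sum_pos2[of _ i0]) auto
  finally show "0 < bilin (lam \<cdot>\<^sub>m 1\<^sub>m n) n z z" .
qed auto

lemma gram_0: "gram lam d k x 0 = lam \<cdot>\<^sub>m 1\<^sub>m d"
  unfolding gram_def by (intro eq_matI) auto

lemma gram_Suc: "gram lam d k x (Suc t) = gram lam d k x t + outer_sum d (\<lambda>i. ($) (x (Suc t) i)) {1..k}"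
  unfolding gram_def outer_sum_def by (intro eq_matI) auto

lemma pos_def_gram: "0 < lam \<Longrightarrow> pos_def d (gram lam d k x t)"
  by (induction t) (simp_all add: gram_0 gram_Suc pos_def_smult_one pos_def_add_outer_sum)

lemma inv_norm_eq_sqrt_bilin:
  assumes V: "pos_def n V" and y: "y \<in> carrier_vec n"
  shows "inv_norm V y = sqrt (bilin (mat_inv V) n (($) y) (($) y))"
  unfolding inv_norm_def mat_inv_def[symmetric]
  using scalar_prod_mult_mat_vec_eq_bilin[OF pos_def_mat_inverse(4)[OF V] y y] by simp

lemma det_gram_ge:
  assumes lam: "0 < lam"
  shows "lam ^ d * (\<Prod>t\<in>{1..T}. 1 + (\<Sum>i\<in>{1..k}.
           bilin (mat_inv (gram lam d k x (t - 1))) d (($) (x t i)) (($) (x t i))))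
         \<le> det (gram lam d k x T)"
proof (induction T)
  case 0
  then show ?case by (simp add: gram_0)
next
  case (Suc T)
  let ?f = "\<lambda>t. 1 + (\<Sum>i\<in>{1..k}. bilin (mat_inv (gram lam d k x (t - 1))) d (($) (x t i)) (($) (x t i)))"
  have f: "1 \<le> ?f t" for t
    using bilin_nonneg[OF pos_def_mat_inv[OF pos_def_gram[OF lam]]] by (simp add: sum_nonneg)
  have "0 < ?f t" for t using f[of t] by linarith
  then have "0 < lam ^ d * prod ?f {1..T}"
    using lam by (intro mult_pos_pos prod_pos) auto
  then have det_pos: "0 < det (gram lam d k x T)" using Suc.IH by linarith
  have "lam ^ d * prod ?f {1..Suc T} = lam ^ d * prod ?f {1..T} * ?f (Suc T)" by simp
  also have "\<dots> \<le> det (gram lam d k x T) * ?f (Suc T)"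
    using Suc.IH f[of "Suc T"] by (intro mult_right_mono) auto
  also have "\<dots> \<le> det (gram lam d k x (Suc T))"
    unfolding gram_Suc diff_Suc_1 by (rule det_add_outer_sum_ge[OF _ pos_def_gram[OF lam] det_pos]) simp
  finally show ?case .
qed

lemma sum_sq_le_of_norm_le:
  fixes y :: "real vec"
  assumes "y \<in> carrier_vec d" "sqrt (y \<bullet> y) \<le> L"
  shows "(\<Sum>a<d. (y $ a)\<^sup>2) \<le> L\<^sup>2"
proof -
  have y: "y \<bullet> y = (\<Sum>a<d. (y $ a)\<^sup>2)"
    using assms(1) by (simp add: scalar_prod_def atLeast0LessThan power2_eq_square)
  then have "0 \<le> y \<bullet> y" by (simp add: sum_nonneg)
  then have "y \<bullet> y = (sqrt (y \<bullet> y))\<^sup>2" by simp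
  also have "\<dots> \<le> L\<^sup>2" using assms(2) \<open>0 \<le> y \<bullet> y\<close> by (intro power_mono) auto
  finally show ?thesis unfolding y .
qed

lemma det_gram_le:
  fixes x :: "nat \<Rightarrow> nat \<Rightarrow> real vec"
  assumes lam: "0 < lam" and d: "0 < d"
    and x: "\<And>t i. t \<in> {1..T} \<Longrightarrow> i \<in> {1..k} \<Longrightarrow> x t i \<in> carrier_vec d"
    and L: "\<And>t i. t \<in> {1..T} \<Longrightarrow> i \<in> {1..k} \<Longrightarrow> sqrt (x t i \<bullet> x t i) \<le> L"
  shows "det (gram lam d k x T) \<le> (lam + real k * real T * L\<^sup>2 / real d) ^ d"
proof -
  let ?V = "gram lam d k x T"
  have "(\<Sum>a<d. ?V $$ (a,a)) = (\<Sum>a<d. lam + (\<Sum>t\<in>{1..T}. \<Sum>i\<in>{1..k}. (x t i $ a)\<^sup>2))"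
    by (intro sum.cong refl) (simp add: gram_def power2_eq_square)
  also have "\<dots> = d * lam + (\<Sum>t\<in>{1..T}. \<Sum>i\<in>{1..k}. \<Sum>a<d. (x t i $ a)\<^sup>2)"
    by (simp add: sum.distrib sum.swap[of _ "{..<d}"])
  also have "\<dots> \<le> d * lam + (\<Sum>t\<in>{1..T}. \<Sum>i\<in>{1..k}. L\<^sup>2)"
    using sum_sq_le_of_norm_le[OF x L] by (intro add_left_mono sum_mono) auto
  finally have trace: "(\<Sum>a<d. ?V $$ (a,a)) / d \<le> lam + real k * real T * L\<^sup>2 / real d"
    using d by (simp add: field_simps)
  have "0 \<le> (\<Sum>a<d. ?V $$ (a,a))"
    by (intro sum_nonneg less_imp_le pos_def_diag_pos[OF pos_def_gram[OF lam]]) simp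
  then have "((\<Sum>a<d. ?V $$ (a,a)) / d) ^ d \<le> (lam + real k * real T * L\<^sup>2 / real d) ^ d"
    using trace by (intro power_mono) auto
  then show ?thesis using det_le_mean_diag_power[OF pos_def_gram[OF lam, of d k x T] d] by linarith
qed

lemma elliptical_potential:
  fixes x :: "nat \<Rightarrow> nat \<Rightarrow> real vec"
  assumes lam: "0 < lam" and d: "0 < d"
    and x: "\<And>t i. t \<in> {1..T} \<Longrightarrow> i \<in> {1..k} \<Longrightarrow> x t i \<in> carrier_vec d"
    and L: "\<And>t i. t \<in> {1..T} \<Longrightarrow> i \<in> {1..k} \<Longrightarrow> sqrt (x t i \<bullet> x t i) \<le> L"
  shows "(\<Sum>t\<in>{1..T}. ln (1 + (\<Sum>i\<in>{1..k}. (inv_norm (gram lam d k x (t - 1)) (x t i))\<^sup>2)))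
         \<le> d * ln (1 + L\<^sup>2 * k * T / (d * lam))"
proof -
  let ?f = "\<lambda>t. 1 + (\<Sum>i\<in>{1..k}. bilin (mat_inv (gram lam d k x (t - 1))) d (($) (x t i)) (($) (x t i)))"
  have f: "0 < ?f t" for t
    using bilin_nonneg[OF pos_def_mat_inv[OF pos_def_gram[OF lam]]]
    by (simp add: add_pos_nonneg sum_nonneg)
  have c: "0 < 1 + L\<^sup>2 * k * T / (d * lam)"
    using lam by (simp add: add_pos_nonneg)
  have trace_eq: "lam + real k * real T * L\<^sup>2 / real d = lam * (1 + L\<^sup>2 * k * T / (d * lam))"
    using lam d by (simp add: field_simps)
  have "lam ^ d * prod ?f {1..T} \<le> (lam + real k * real T * L\<^sup>2 / real d) ^ d"
  proof (rule order_trans)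
    show "det (gram lam d k x T) \<le> (lam + real k * real T * L\<^sup>2 / real d) ^ d"
      by (rule det_gram_le) (use lam d x L in auto)
  qed (rule det_gram_ge[OF lam])
  then have "ln (lam ^ d * prod ?f {1..T}) \<le> ln ((lam + real k * real T * L\<^sup>2 / real d) ^ d)"
    using lam f by (intro ln_mono) (auto intro!: mult_pos_pos prod_pos)
  moreover have "ln (lam ^ d * prod ?f {1..T}) = d * ln lam + (\<Sum>t\<in>{1..T}. ln (?f t))"
    using lam f by (simp add: ln_mult ln_realpow ln_prod prod_pos less_imp_neq[symmetric])
  moreover have "ln ((lam + real k * real T * L\<^sup>2 / real d) ^ d)
      = d * ln lam + d * ln (1 + L\<^sup>2 * k * T / (d * lam))"
    unfolding trace_eq ln_realpow ln_mult_pos[OF lam c] by (simp add: distrib_left)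
  moreover have "(inv_norm (gram lam d k x (t - 1)) (x t i))\<^sup>2
      = bilin (mat_inv (gram lam d k x (t - 1))) d (($) (x t i)) (($) (x t i))"
    if "t \<in> {1..T}" "i \<in> {1..k}" for t i
    using inv_norm_eq_sqrt_bilin[OF pos_def_gram[OF lam] x[OF that]]
      bilin_nonneg[OF pos_def_mat_inv[OF pos_def_gram[OF lam]]] by simp
  ultimately show ?thesis by simp
qed

lemma le_two_mul_ln_one_plus:
  fixes y :: real
  assumes "0 \<le> y" "y \<le> 1"
  shows "y \<le> 2 * ln (1 + y)"
proof -
  have "ln (1 / (1 + y)) \<le> 1 / (1 + y) - 1" using assms by (intro ln_le_minus_one) simp
  then have "y / (1 + y) \<le> ln (1 + y)" using assms by (simp add: ln_div field_simps)
  moreover have "y / 2 \<le> y / (1 + y)" using assms by (intro divide_left_mono) auto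
  ultimately show ?thesis by linarith
qed

lemma sum_sqrt_le_sqrt_card_mult_sum:
  fixes m :: "'a \<Rightarrow> real"
  assumes "finite A" "\<And>i. i \<in> A \<Longrightarrow> 0 \<le> m i"
  shows "(\<Sum>i\<in>A. sqrt (m i)) \<le> sqrt (real (card A) * (\<Sum>i\<in>A. m i))"
proof -
  have "(\<Sum>i\<in>A. sqrt (m i)) = (\<Sum>i\<in>A. \<bar>sqrt (m i)\<bar> * \<bar>1\<bar>)" using assms(2) by simp
  also have "\<dots> \<le> L2_set (\<lambda>i. sqrt (m i)) A * L2_set (\<lambda>_. 1) A" by (rule L2_set_mult_ineq)
  also have "L2_set (\<lambda>i. sqrt (m i)) A = sqrt (\<Sum>i\<in>A. m i)"
    unfolding L2_set_def using assms(2) by simp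
  finally show ?thesis by (simp add: L2_set_constant real_sqrt_mult mult.commute)
qed

lemma sum_truncated_le_of_sum_ln:
  fixes r :: "'a \<Rightarrow> 'b \<Rightarrow> real" and G :: real
  assumes I: "finite I" "I \<noteq> {}"
    and G: "(\<Sum>t\<in>A. ln (1 + (\<Sum>i\<in>I. (r t i)\<^sup>2))) \<le> G"
  shows "(\<Sum>t\<in>A. \<Sum>i\<in>I. min (1 / card I) ((r t i)\<^sup>2)) \<le> 2 * G"
proof -
  have "(\<Sum>i\<in>I. min (1 / card I) ((r t i)\<^sup>2)) \<le> 2 * ln (1 + (\<Sum>i\<in>I. (r t i)\<^sup>2))" for t
  proof -
    let ?m = "\<Sum>i\<in>I. min (1 / card I) ((r t i)\<^sup>2)"
    have "0 \<le> ?m" by (intro sum_nonneg) simp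
    moreover have "?m \<le> (\<Sum>i\<in>I. 1 / card I)" by (intro sum_mono) simp
    then have "?m \<le> 1" using I by simp
    ultimately have "?m \<le> 2 * ln (1 + ?m)" by (rule le_two_mul_ln_one_plus)
    moreover have "ln (1 + ?m) \<le> ln (1 + (\<Sum>i\<in>I. (r t i)\<^sup>2))"
      using \<open>0 \<le> ?m\<close> by (intro ln_mono sum_mono add_left_mono) auto
    ultimately show ?thesis by linarith
  qed
  then have "(\<Sum>t\<in>A. \<Sum>i\<in>I. min (1 / card I) ((r t i)\<^sup>2))
      \<le> (\<Sum>t\<in>A. 2 * ln (1 + (\<Sum>i\<in>I. (r t i)\<^sup>2)))" by (rule sum_mono)
  also have "\<dots> \<le> 2 * G" using G by (simp add: sum_distrib_left[symmetric])
  finally show ?thesis .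
qed

lemma sum_min_le_of_sum_ln:
  fixes r :: "'a \<Rightarrow> 'b \<Rightarrow> real" and G :: real
  assumes A: "finite A" and I: "finite I" "I \<noteq> {}"
    and r: "\<And>t i. t \<in> A \<Longrightarrow> i \<in> I \<Longrightarrow> 0 \<le> r t i"
    and G: "(\<Sum>t\<in>A. ln (1 + (\<Sum>i\<in>I. (r t i)\<^sup>2))) \<le> G"
  shows "(\<Sum>t\<in>A. \<Sum>i\<in>I. min (1 / sqrt (card I)) (r t i)) \<le> sqrt (2 * real (card A) * real (card I) * G)"
proof -
  let ?m = "\<lambda>t i. min (1 / card I) ((r t i)\<^sup>2)"
  have min_sqrt: "min (sqrt a) (sqrt b) = sqrt (min a b)" for a b by (simp add: min_def)
  have "min (1 / sqrt (card I)) (r t i) = sqrt (?m t i)" if "t \<in> A" "i \<in> I" for t i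
  proof -
    have "min (1 / sqrt (card I)) (r t i) = min (sqrt (1 / card I)) (sqrt ((r t i)\<^sup>2))"
      using r[OF that] by (simp add: real_sqrt_divide)
    then show ?thesis unfolding min_sqrt .
  qed
  then have "(\<Sum>t\<in>A. \<Sum>i\<in>I. min (1 / sqrt (card I)) (r t i)) = (\<Sum>(t,i)\<in>A \<times> I. sqrt (?m t i))"
    by (simp add: sum.cartesian_product)
  also have "\<dots> \<le> sqrt (real (card (A \<times> I)) * (\<Sum>(t,i)\<in>A \<times> I. ?m t i))"
    using sum_sqrt_le_sqrt_card_mult_sum[of "A \<times> I" "\<lambda>(t,i). ?m t i"] A I
    by (simp add: split_def)
  also have "\<dots> = sqrt (real (card A) * real (card I) * (\<Sum>t\<in>A. \<Sum>i\<in>I. ?m t i))"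
    by (simp add: sum.cartesian_product card_cartesian_product)
  also have "\<dots> \<le> sqrt (real (card A) * real (card I) * (2 * G))"
    using sum_truncated_le_of_sum_ln[OF I G] by (intro real_sqrt_le_mono mult_left_mono) auto
  finally show ?thesis by (simp add: ac_simps)
qed

lemma count_le_of_sum_ln:
  fixes r :: "'a \<Rightarrow> 'b \<Rightarrow> real" and G :: real
  assumes I: "finite I" "I \<noteq> {}"
    and G: "(\<Sum>t\<in>A. ln (1 + (\<Sum>i\<in>I. (r t i)\<^sup>2))) \<le> G"
  shows "(\<Sum>t\<in>A. \<Sum>i\<in>I. if r t i > 1 / sqrt (card I) then 1 else 0 :: real) \<le> 2 * real (card I) * G"
proof -
  have c: "0 < card I" using I by (simp add: card_gt_0_iff)
  have count: "(if r t i > 1 / sqrt (card I) then 1 else 0) \<le> real (card I) * min (1 / card I) ((r t i)\<^sup>2)"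
    for t i
  proof (cases "r t i > 1 / sqrt (card I)")
    case True
    then have "(1 / sqrt (card I))\<^sup>2 < (r t i)\<^sup>2" by (intro power_strict_mono) auto
    then show ?thesis using True c by (simp add: power_divide)
  qed (simp add: c)
  have "(\<Sum>t\<in>A. \<Sum>i\<in>I. if r t i > 1 / sqrt (card I) then 1 else 0 :: real)
      \<le> (\<Sum>t\<in>A. \<Sum>i\<in>I. real (card I) * min (1 / card I) ((r t i)\<^sup>2))"
    by (intro sum_mono count)
  also have "\<dots> = real (card I) * (\<Sum>t\<in>A. \<Sum>i\<in>I. min (1 / card I) ((r t i)\<^sup>2))"
    by (simp add: sum_distrib_left)
  also have "\<dots> \<le> real (card I) * (2 * G)"
    using sum_truncated_le_of_sum_ln[OF I G] by (intro mult_left_mono) auto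
  finally show ?thesis by simp
qed

theorem lemma2:
  shows "\<exists>(C::real) (p::nat). \<forall>(lam::real) (L::real) (d::nat) (k::nat) (T::nat)
           (x :: nat \<Rightarrow> nat \<Rightarrow> real vec).
    lam > 0 \<longrightarrow> L > 0 \<longrightarrow> d > 0 \<longrightarrow> k > 0 \<longrightarrow> T > 0 \<longrightarrow>
    (\<forall>t\<in>{1..T}. \<forall>i\<in>{1..k}. x t i \<in> carrier_vec d \<and> sqrt (x t i \<bullet> x t i) \<le> L) \<longrightarrow>
    (\<Sum>t\<in>{1..T}. \<Sum>i\<in>{1..k}.
        min (1 / sqrt (real k)) (inv_norm (gram lam d k x (t - 1)) (x t i)))
      \<le> C * sqrt (real d * real k * real T)
          * (1 + ln (1 + L\<^sup>2 * real k * real T / (real d * lam))) ^ p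
    \<and>
    (\<Sum>t\<in>{1..T}. \<Sum>i\<in>{1..k}.
        (if inv_norm (gram lam d k x (t - 1)) (x t i) > 1 / sqrt (real k) then 1 else 0 :: real))
      \<le> C * real d * real k
          * (1 + ln (1 + L\<^sup>2 * real k * real T / (real d * lam))) ^ p"
proof (intro exI[of _ "2::real"] exI[of _ "1::nat"] allI impI conjI)
  fix lam L :: real and d k T :: nat and x :: "nat \<Rightarrow> nat \<Rightarrow> real vec"
  assume lam: "lam > 0" and "L > 0" and d: "d > 0" and k: "k > 0" and "T > 0"
    and x: "\<forall>t\<in>{1..T}. \<forall>i\<in>{1..k}. x t i \<in> carrier_vec d \<and> sqrt (x t i \<bullet> x t i) \<le> L"
  let ?g = "ln (1 + L\<^sup>2 * real k * real T / (real d * lam))"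
  let ?r = "\<lambda>t i. inv_norm (gram lam d k x (t - 1)) (x t i)"
  have g: "0 \<le> ?g" using lam by simp
  have r: "0 \<le> ?r t i" if "t \<in> {1..T}" "i \<in> {1..k}" for t i
    using inv_norm_eq_sqrt_bilin[OF pos_def_gram[OF lam]] x that
      bilin_nonneg[OF pos_def_mat_inv[OF pos_def_gram[OF lam]]] by simp
  have potential: "(\<Sum>t\<in>{1..T}. ln (1 + (\<Sum>i\<in>{1..k}. (?r t i)\<^sup>2))) \<le> real d * ?g"
    by (rule elliptical_potential[OF lam d]) (use x in auto)
  have "(\<Sum>t\<in>{1..T}. \<Sum>i\<in>{1..k}. min (1 / sqrt (real k)) (?r t i))
      \<le> sqrt (2 * real T * real k * (real d * ?g))"
    using sum_min_le_of_sum_ln[OF _ _ _ r potential] k by simp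
  also have "\<dots> = sqrt (real d * real k * real T) * sqrt (2 * ?g)"
    by (simp add: real_sqrt_mult[symmetric] ac_simps)
  also have "\<dots> \<le> sqrt (real d * real k * real T) * (1 + ?g)"
    using g by (intro mult_left_mono) (simp_all add: real_sqrt_le_iff real_le_lsqrt power2_sum)
  also have "\<dots> \<le> 2 * sqrt (real d * real k * real T) * (1 + ?g) ^ 1"
    using g by simp
  finally show "(\<Sum>t\<in>{1..T}. \<Sum>i\<in>{1..k}. min (1 / sqrt (real k)) (?r t i))
      \<le> 2 * sqrt (real d * real k * real T) * (1 + ?g) ^ 1" .
  show "(\<Sum>t\<in>{1..T}. \<Sum>i\<in>{1..k}. if ?r t i > 1 / sqrt (real k) then 1 else 0 :: real)
      \<le> 2 * real d * real k * (1 + ?g) ^ 1"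
    using count_le_of_sum_ln[OF _ _ potential] k mult_left_mono[of ?g "1 + ?g" "2 * real d * real k"]
    by (simp add: ac_simps)
qed

end
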